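(* Let $C$ be a maximal independent set of the Kneser graph $\Gamma$ of flags of type $\{2,3\}$ of $\mathrm{PG}(6,q)$. (i) For every saturated solid $S$ and every flag $(E',S')\in C$ we have $E'\cap S\neq\emptyset$. (ii) If $S$ is a solid with $S\cap E'\neq\emptyset$ for all flags $(E',S')\in C$, then $S$ is saturated. (iii) If $S$ and $S'$ are saturated solids, then $\dim(S\cap S')\ge 1$. (iv) If $H$ is a hyperplane with $E\subseteq H$ for all flags $(E,S)\in C$, then every solid of $H$ is saturated.
   Context: Dimensions are projective (planes 2, solids 3, hyperplanes 5). A flag of type $\{2,3\}$ is a pair $(E,S)$ of a plane $E$ and a solid $S$ with $E\subseteq S$; in $\Gamma$ distinct flags $(E,S),(E',S')$ are adjacent iff $E\cap S'=\emptyset$ and $E'\cap S=\emptyset$. A solid $S$ is saturated (for $C$) if $(E,S)\in C$ for all planes $E$ of $S$. *)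

theory Defs
  imports "HOL-Analysis.Analysis" "HOL-Library.Numeral_Type"
begin

text \<open>PG(6,q) is modelled as the lattice of subspaces of the 7-dimensional vector
space over a finite field 'a with q elements (q = CARD('a)).  A projective
subspace of projective dimension d is a vector subspace of vector dimension d+1.
Projective disjointness means the vector intersection is the zero space.\<close>

type_synonym 'a pt = "'a ^ 7"

definition psub :: "nat \<Rightarrow> ('a::field) pt set \<Rightarrow> bool" where
  "psub d U \<longleftrightarrow> vec.subspace U \<and> vec.dim U = d + 1"

abbreviation plane where "plane E \<equiv> psub 2 E"
abbreviation solid where "solid S \<equiv> psub 3 S"
abbreviation hyperplane where "hyperplane H \<equiv> psub 5 H"

definition pdisjoint :: "('a::field) pt set \<Rightarrow> 'a pt set \<Rightarrow> bool" where
  "pdisjoint U W \<longleftrightarrow> U \<inter> W = {0}"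

definition flags23 :: "(('a::field) pt set \<times> 'a pt set) set" where
  "flags23 = {(E, S). plane E \<and> solid S \<and> E \<subseteq> S}"

definition adjacent :: "(('a::field) pt set \<times> 'a pt set) \<Rightarrow> ('a pt set \<times> 'a pt set) \<Rightarrow> bool" where
  "adjacent F F' \<longleftrightarrow> F \<in> flags23 \<and> F' \<in> flags23 \<and> F \<noteq> F' \<and>
     pdisjoint (fst F) (snd F') \<and> pdisjoint (fst F') (snd F)"

definition independent :: "(('a::field) pt set \<times> 'a pt set) set \<Rightarrow> bool" where
  "independent C \<longleftrightarrow> C \<subseteq> flags23 \<and> (\<forall>F\<in>C. \<forall>F'\<in>C. \<not> adjacent F F')"

definition maximal_independent :: "(('a::field) pt set \<times> 'a pt set) set \<Rightarrow> bool" where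
  "maximal_independent C \<longleftrightarrow> independent C \<and>
     (\<forall>D. independent D \<and> C \<subseteq> D \<longrightarrow> D = C)"

definition saturated :: "(('a::field) pt set \<times> 'a pt set) set \<Rightarrow> 'a pt set \<Rightarrow> bool" where
  "saturated C S \<longleftrightarrow> solid S \<and> (\<forall>E. plane E \<and> E \<subseteq> S \<longrightarrow> (E, S) \<in> C)"

end

theory Submission
  imports Defs
begin

text \<open>Everything rests on one dimension count: a solid S meeting another solid S' in at
most a point contains a plane E missing S'.  For (i), a flag (E', S') of C with E' missing S
forces S \<inter> S' to be at most a point (E' is a plane of S' missing it), and the flag (E, S)
of the saturated solid S is then adjacent to (E', S').  For (iii), the flag (E, S) contradicts
(i) for S'.  For (ii), maximality puts into C every flag (E, S), as none is adjacent to a flag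
of C.  For (iv), a solid and a plane of a hyperplane always meet, so (ii) applies.\<close>

lemma dim_Int_lower_bound:
  fixes A B V :: "('a::field) pt set"
  assumes "vec.subspace A" "vec.subspace B" "vec.subspace V" "A \<subseteq> V" "B \<subseteq> V"
  shows "vec.dim A + vec.dim B \<le> vec.dim (A \<inter> B) + vec.dim V"
proof -
  have "{x + y |x y. x \<in> A \<and> y \<in> B} \<subseteq> V"
    using assms by (auto intro: vec.subspace_add)
  then have "vec.dim {x + y |x y. x \<in> A \<and> y \<in> B} \<le> vec.dim V"
    by (rule vec.dim_subset)
  then show ?thesis
    using vec.dim_sums_Int[OF assms(1,2)] by linarith
qed

lemma pdisjoint_iff_dim_Int_eq_0:
  fixes U W :: "('a::field) pt set"
  assumes "vec.subspace U" "vec.subspace W"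
  shows "pdisjoint U W \<longleftrightarrow> vec.dim (U \<inter> W) = 0"
  using assms vec.subspace_0 by (auto simp: pdisjoint_def vec.dim_eq_0)

lemma pdisjoint_commute: "pdisjoint U W \<longleftrightarrow> pdisjoint W U"
  by (auto simp: pdisjoint_def)

lemma exists_subspace_disjoint:
  fixes S M :: "('a::field) pt set"
  assumes S: "vec.subspace S" and M: "vec.subspace M" "M \<subseteq> S"
    and dim: "vec.dim M + k \<le> vec.dim S"
  shows "\<exists>E. vec.subspace E \<and> vec.dim E = k \<and> E \<subseteq> S \<and> pdisjoint E M"
proof -
  obtain B0 where B0: "B0 \<subseteq> M" "vec.independent B0" "M \<subseteq> vec.span B0" "card B0 = vec.dim M"
    by (rule vec.basis_exists)
  obtain B where B: "B0 \<subseteq> B" "B \<subseteq> S" "vec.independent B" "S \<subseteq> vec.span B"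
    using vec.maximal_independent_subset_extend B0(1,2) M(2) by (metis order_trans)
  have "finite B"
    using B(3) by (rule vec.finiteI_independent)
  moreover have "card B = vec.dim S"
    using vec.basis_card_eq_dim[OF B(2,4,3)] .
  ultimately have "k \<le> card (B - B0)"
    using B(1) B0(4) dim by (simp add: card_Diff_subset finite_subset)
  then obtain T where T: "T \<subseteq> B - B0" "card T = k" "finite T"
    by (rule obtain_subset_with_card_n)
  have span_B0: "vec.span B0 = M"
    using vec.span_subspace[OF B0(1,3) M(1)] .
  have ind_T: "vec.independent T" and ind_TB0: "vec.independent (T \<union> B0)"
    using vec.independent_mono[OF B(3)] T(1) B(1) by blast+
  define E where "E = vec.span T"
  have "T \<subseteq> S"
    using T(1) B(2) by blast
  then have E: "vec.subspace E" "vec.dim E = k" "E \<subseteq> S"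
    unfolding E_def using vec.dim_span_eq_card_independent[OF ind_T] T(2) S
    by (simp_all add: vec.span_minimal)
  have "vec.dim {x + y |x y. x \<in> E \<and> y \<in> M} = vec.dim (vec.span (T \<union> B0))"
    unfolding vec.span_Un E_def span_B0 by simp
  also have "\<dots> = k + vec.dim M"
    using vec.dim_span_eq_card_independent[OF ind_TB0] T B0(4)
      card_Un_disjoint[OF T(3) finite_subset[OF B(1) \<open>finite B\<close>]] by auto
  finally have "vec.dim (E \<inter> M) = 0"
    using vec.dim_sums_Int[OF E(1) M(1)] E(2) by linarith
  then show ?thesis
    using E M(1) pdisjoint_iff_dim_Int_eq_0 by blast
qed

lemma exists_plane_disjoint:
  fixes S W :: "('a::field) pt set"
  assumes "solid S" "vec.subspace W" "vec.dim (S \<inter> W) \<le> 1"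
  shows "\<exists>E. plane E \<and> E \<subseteq> S \<and> pdisjoint E W"
proof -
  have "vec.subspace (S \<inter> W)"
    using assms psub_def vec.subspace_inter by blast
  then obtain E where "plane E" "E \<subseteq> S" "pdisjoint E (S \<inter> W)"
    using exists_subspace_disjoint[of S "S \<inter> W" 3] assms by (auto simp: psub_def)
  then show ?thesis
    by (auto simp: pdisjoint_def)
qed

lemma independent_memD:
  assumes "independent C" "(E, S) \<in> C"
  shows "plane E" "solid S" "E \<subseteq> S"
  using assms by (auto simp: independent_def flags23_def)

lemma adjacent_commute: "adjacent F F' \<longleftrightarrow> adjacent F' F"
  unfolding adjacent_def by blast

lemma maximal_independent_memI:
  assumes "maximal_independent C" "F \<in> flags23" "\<forall>F'\<in>C. \<not> adjacent F F'"
  shows "F \<in> C"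
proof -
  have "independent (insert F C)"
    using assms adjacent_commute
    by (auto simp: maximal_independent_def independent_def adjacent_def)
  then show ?thesis
    using assms(1) unfolding maximal_independent_def by blast
qed

lemma saturated_meets_planes:
  fixes C :: "(('a::field) pt set \<times> 'a pt set) set"
  assumes C: "independent C" and sat: "saturated C S" and F: "(E', S') \<in> C"
  shows "\<not> pdisjoint E' S"
proof
  assume disj: "pdisjoint E' S"
  have "plane E'" "solid S'" and E'S': "E' \<subseteq> S'" and "solid S"
    using independent_memD[OF C F] sat by (auto simp: saturated_def)
  then have E': "vec.subspace E'" "vec.dim E' = 3" and S': "vec.subspace S'" "vec.dim S' = 4"
    and S: "vec.subspace S" "vec.dim S = 4"
    by (auto simp: psub_def)
  have "(S \<inter> S') \<inter> E' = E' \<inter> S"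
    using E'S' by auto
  moreover have "vec.dim (E' \<inter> S) = 0"
    using disj pdisjoint_iff_dim_Int_eq_0[OF E'(1) S(1)] by blast
  ultimately have "vec.dim ((S \<inter> S') \<inter> E') = 0"
    by (simp only:)
  moreover have "vec.dim (S \<inter> S') + vec.dim E' \<le> vec.dim ((S \<inter> S') \<inter> E') + vec.dim S'"
    using dim_Int_lower_bound[of "S \<inter> S'" E' S'] S(1) S'(1) E'(1) E'S'
    by (auto simp: vec.subspace_inter)
  ultimately have "vec.dim (S \<inter> S') \<le> 1"
    using S'(2) E'(2) by linarith
  then obtain E where E: "plane E" "E \<subseteq> S" "pdisjoint E S'"
    using exists_plane_disjoint \<open>solid S\<close> S'(1) by blast
  have "(E, S) \<in> C"
    using sat E by (simp add: saturated_def)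
  moreover have "S \<noteq> S'"
  proof
    assume "S = S'"
    then have "E' = {0}"
      using disj E'S' by (auto simp: pdisjoint_def)
    then show False
      using E'(2) vec.dim_eq_0[of E'] by simp
  qed
  then have "adjacent (E, S) (E', S')"
    using E E'S' disj \<open>plane E'\<close> \<open>solid S\<close> \<open>solid S'\<close>
    by (auto simp: adjacent_def flags23_def)
  ultimately show False
    using C F by (auto simp: independent_def)
qed

lemma saturated_if_meets_planes:
  fixes C :: "(('a::field) pt set \<times> 'a pt set) set"
  assumes C: "maximal_independent C" and S: "solid S"
    and meets: "\<forall>(E', S')\<in>C. \<not> pdisjoint S E'"
  shows "saturated C S"
  unfolding saturated_def
proof (intro conjI allI impI)
  fix E
  assume E: "plane E \<and> E \<subseteq> S"
  show "(E, S) \<in> C"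
  proof (rule maximal_independent_memI[OF C])
    show "(E, S) \<in> flags23"
      using E S by (simp add: flags23_def)
    show "\<forall>F'\<in>C. \<not> adjacent (E, S) F'"
      using meets by (auto simp: adjacent_def pdisjoint_commute)
  qed
qed (rule S)

lemma saturated_solids_meet_in_line:
  fixes C :: "(('a::field) pt set \<times> 'a pt set) set"
  assumes C: "independent C" and sat: "saturated C S" "saturated C S'"
  shows "vec.dim (S \<inter> S') \<ge> 2"
proof (rule ccontr)
  assume "\<not> vec.dim (S \<inter> S') \<ge> 2"
  moreover have "solid S" "solid S'"
    using sat by (auto simp: saturated_def)
  ultimately obtain E where E: "plane E" "E \<subseteq> S" "pdisjoint E S'"
    using exists_plane_disjoint[of S S'] by (auto simp: psub_def)
  then have "(E, S) \<in> C"
    using sat(1) by (simp add: saturated_def)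
  then show False
    using saturated_meets_planes[OF C sat(2)] E(3) by blast
qed

lemma solid_meets_plane_in_hyperplane:
  fixes S E H :: "('a::field) pt set"
  assumes "hyperplane H" "solid S" "plane E" "S \<subseteq> H" "E \<subseteq> H"
  shows "\<not> pdisjoint S E"
proof -
  have S: "vec.subspace S" "vec.dim S = 4" and E: "vec.subspace E" "vec.dim E = 3"
    and H: "vec.subspace H" "vec.dim H = 6"
    using assms by (simp_all add: psub_def)
  then have "vec.dim S + vec.dim E \<le> vec.dim (S \<inter> E) + vec.dim H"
    using dim_Int_lower_bound assms(4,5) by blast
  then have "vec.dim (S \<inter> E) \<noteq> 0"
    using S(2) E(2) H(2) by linarith
  then show ?thesis
    using pdisjoint_iff_dim_Int_eq_0[OF S(1) E(1)] by (simp del: vec.dim_eq_0)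
qed

lemma saturated_if_planes_in_hyperplane:
  fixes C :: "(('a::field) pt set \<times> 'a pt set) set"
  assumes C: "maximal_independent C" and H: "hyperplane H" "\<forall>(E, S)\<in>C. E \<subseteq> H"
    and S: "solid S" "S \<subseteq> H"
  shows "saturated C S"
proof -
  have "\<not> pdisjoint S E'" if F: "(E', S') \<in> C" for E' S'
  proof (rule solid_meets_plane_in_hyperplane[OF H(1) S(1) _ S(2)])
    show "plane E'"
      using C F independent_memD(1) by (auto simp: maximal_independent_def)
    show "E' \<subseteq> H"
      using H(2) F by blast
  qed
  then show ?thesis
    using saturated_if_meets_planes[OF C S(1)] by blast
qed

theorem lemma6p3:
  fixes C :: "(('a::{field,finite}) pt set \<times> 'a pt set) set"
  assumes "maximal_independent C"
  shows "(\<forall>S. saturated C S \<longrightarrow> (\<forall>(E', S')\<in>C. \<not> pdisjoint E' S))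
    \<and> (\<forall>S. solid S \<and> (\<forall>(E', S')\<in>C. \<not> pdisjoint S E') \<longrightarrow> saturated C S)
    \<and> (\<forall>S S'. saturated C S \<and> saturated C S' \<longrightarrow> vec.dim (S \<inter> S') \<ge> 2)
    \<and> (\<forall>H. hyperplane H \<and> (\<forall>(E, S)\<in>C. E \<subseteq> H) \<longrightarrow>
          (\<forall>S. solid S \<and> S \<subseteq> H \<longrightarrow> saturated C S))"
proof (intro conjI allI impI)
  have C: "independent C"
    using assms by (simp add: maximal_independent_def)
  show "\<forall>(E', S')\<in>C. \<not> pdisjoint E' S" if "saturated C S" for S
    using saturated_meets_planes[OF C that] by blast
  show "saturated C S" if "solid S \<and> (\<forall>(E', S')\<in>C. \<not> pdisjoint S E')" for S
    using saturated_if_meets_planes[OF assms] that by blast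
  show "vec.dim (S \<inter> S') \<ge> 2" if "saturated C S \<and> saturated C S'" for S S'
    using saturated_solids_meet_in_line[OF C] that by blast
  show "saturated C S"
    if "hyperplane H \<and> (\<forall>(E, S)\<in>C. E \<subseteq> H)" "solid S \<and> S \<subseteq> H" for H S
    using saturated_if_planes_in_hyperplane[OF assms] that by blast
qed

end
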